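(* Let ${\bf x}_0:\mathbb{R}\to\mathbb{R}^m$ be a given continuous bounded leader trajectory, and consider followers $$\dot{\bf x}_i(t)=\sum_{j\in\mathcal{N}_i}{\bf K}_{ji}\big({\bf x}_j(t-T_{ji})-{\bf x}_i(t)\big)+\gamma_i{\bf K}_{0i}\big({\bf x}_0(t-T_{0i})-{\bf x}_i(t)\big),\quad i=1,\dots,n,$$ with the same hypotheses as follows: fixed neighbor sets $\mathcal{N}_i$ among followers; constant symmetric positive definite gains ${\bf K}_{ji}$ and ${\bf K}_{0i}$ (for $\gamma_i=1$); $\gamma_i\in\{0,1\}$ with at least one $\gamma_i=1$; constant delays $T_{ji},T_{0i}\ge0$; the network including the leader is connected; follower links are bidirectional with ${\bf K}_{ji}={\bf K}_{ij}$ or unidirectional in closed rings with identical gains in each ring. Then the follower system is asymptotically contracting regardless of the delays: all its solutions converge asymptotically to a single trajectory, independently of the initial conditions. Moreover, if ${\bf x}_0$ is periodic, all follower states tend to periodic functions with the same period as ${\bf x}_0$.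
   Context: Asymptotically contracting means every virtual displacement between neighboring solutions tends to zero, implying that all solutions converge asymptotically to one another. *)

theory Defs
  imports "HOL-Analysis.Analysis"
begin

text \<open>Followers are indexed by 1..n, the leader by 0.
  N i : neighbour set of follower i (followers j whose state enters follower i's equation);
  K j i : gain matrix of the link j -> i (K 0 i: leader gain of follower i);
  T j i : delay of the link j -> i (T 0 i: leader delay);
  g i  : the coefficient gamma_i in {0,1}.\<close>

definition sym_pos_def_mat :: "real^'m^'m \<Rightarrow> bool" where
  "sym_pos_def_mat A \<longleftrightarrow> transpose A = A \<and> (\<forall>v. v \<noteq> 0 \<longrightarrow> v \<bullet> (A *v v) > 0)"

definition net_edges :: "nat \<Rightarrow> (nat \<Rightarrow> nat set) \<Rightarrow> (nat \<Rightarrow> real) \<Rightarrow> (nat \<times> nat) set" where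
  "net_edges n N g = {(j,i). i \<in> {1..n} \<and> j \<in> N i} \<union> {(0,i) | i. i \<in> {1..n} \<and> g i = 1}"

definition net_connected :: "nat \<Rightarrow> (nat \<Rightarrow> nat set) \<Rightarrow> (nat \<Rightarrow> real) \<Rightarrow> bool" where
  "net_connected n N g \<longleftrightarrow>
     (\<forall>a\<in>{0..n}. \<forall>b\<in>{0..n}. (a,b) \<in> (net_edges n N g \<union> (net_edges n N g)\<inverse>)\<^sup>*)"

definition unidir_link :: "(nat \<Rightarrow> nat set) \<Rightarrow> nat \<Rightarrow> nat \<Rightarrow> bool" where
  "unidir_link N j i \<longleftrightarrow> j \<in> N i \<and> i \<notin> N j"

definition ring_edges :: "nat list \<Rightarrow> (nat \<times> nat) set" where
  "ring_edges r = {(r ! k, r ! ((k + 1) mod length r)) | k. k < length r}"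

definition links_ok :: "nat \<Rightarrow> (nat \<Rightarrow> nat set) \<Rightarrow> (nat \<Rightarrow> nat \<Rightarrow> real^'m^'m) \<Rightarrow> bool" where
  "links_ok n N K \<longleftrightarrow>
     (\<forall>i\<in>{1..n}. \<forall>j\<in>N i. i \<in> N j \<longrightarrow> K j i = K i j) \<and>
     (\<exists>Rs :: nat list list.
        (\<forall>r\<in>set Rs. distinct r \<and> length r \<ge> 2 \<and> set r \<subseteq> {1..n} \<and>
            (\<forall>(j,i)\<in>ring_edges r. unidir_link N j i) \<and>
            (\<exists>A. \<forall>(j,i)\<in>ring_edges r. K j i = A)) \<and>
        (\<forall>i\<in>{1..n}. \<forall>j. unidir_link N j i \<longrightarrow>
            (\<exists>!k. k < length Rs \<and> (j,i) \<in> ring_edges (Rs ! k))))"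

definition follower_rhs ::
  "(nat \<Rightarrow> nat set) \<Rightarrow> (nat \<Rightarrow> nat \<Rightarrow> real^'m^'m) \<Rightarrow> (nat \<Rightarrow> nat \<Rightarrow> real) \<Rightarrow> (nat \<Rightarrow> real)
   \<Rightarrow> (real \<Rightarrow> real^'m) \<Rightarrow> (nat \<Rightarrow> real \<Rightarrow> real^'m) \<Rightarrow> nat \<Rightarrow> real \<Rightarrow> real^'m" where
  "follower_rhs N K T g x0 x i t =
     (\<Sum>j\<in>N i. K j i *v (x j (t - T j i) - x i t))
     + g i *\<^sub>R (K 0 i *v (x0 (t - T 0 i) - x i t))"

text \<open>A solution of the follower system: continuous follower trajectories on the
  real line (values at t \<le> 0 form the continuous initial history) satisfying the
  delay differential equation for all t > 0.\<close>
definition follower_solution ::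
  "nat \<Rightarrow> (nat \<Rightarrow> nat set) \<Rightarrow> (nat \<Rightarrow> nat \<Rightarrow> real^'m^'m) \<Rightarrow> (nat \<Rightarrow> nat \<Rightarrow> real) \<Rightarrow> (nat \<Rightarrow> real)
   \<Rightarrow> (real \<Rightarrow> real^'m) \<Rightarrow> (nat \<Rightarrow> real \<Rightarrow> real^'m) \<Rightarrow> bool" where
  "follower_solution n N K T g x0 x \<longleftrightarrow>
     (\<forall>i\<in>{1..n}. continuous_on UNIV (x i) \<and>
        (\<forall>t>0. (x i has_vector_derivative follower_rhs N K T g x0 x i t) (at t)))"

end

theory Submission
  imports Defs
begin

text \<open>The difference of two solutions solves the follower system without leader input. Its
  Lyapunov--Krasovskii functional \<open>energy\<close> (half the squared states plus, for every link, half
  the integral of the gain's quadratic form over the delay interval) has derivative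
  \<open>- dissipation\<close>, a nonnegative combination of quadratic forms in the link mismatches
  \<open>e\<^sub>i t - e\<^sub>j (t - T\<^sub>j\<^sub>i)\<close> and in the pinned states: the remaining cross terms cancel because the
  gains are symmetric on bidirectional links and equal along each unidirectional ring.
  The energy drop over a time window therefore bounds the integrals of the mismatches and of the
  pinned states. By connectivity this bound propagates from the leader to every follower, at the
  cost of one maximal delay at each end of the window and a factor 3 per link, so at some time of
  the window the energy is at most a fixed multiple of its drop. The energy thus contracts by a
  fixed factor over every window of a fixed length and decays exponentially, whatever the delays.
  For a \<open>P\<close>-periodic leader, applying this to a solution and its translate by \<open>P\<close> makes
  \<open>x (t + P) - x t\<close> exponentially small, and a telescoping series yields the periodic limit.\<close>

section \<open>Quadratic forms\<close>

definition quad_form :: "real^'n^'n \<Rightarrow> real^'n \<Rightarrow> real" where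
  "quad_form A v = v \<bullet> (A *v v)"

lemma quad_form_diff:
  fixes A :: "real^'n^'n"
  assumes "transpose A = A"
  shows "quad_form A (a - b) = quad_form A a - 2 * (a \<bullet> (A *v b)) + quad_form A b"
proof -
  have "b \<bullet> (A *v a) = a \<bullet> (A *v b)"
    by (metis assms dot_lmul_matrix inner_commute vector_transpose_matrix)
  then show ?thesis
    by (simp add: quad_form_def matrix_vector_mult_diff_distrib inner_diff_left inner_diff_right)
qed

lemma quad_form_scaleR: "quad_form A (c *\<^sub>R v) = c\<^sup>2 * quad_form A v"
  by (simp add: quad_form_def matrix_vector_mult_scaleR power2_eq_square)

lemma continuous_on_quad_form [continuous_intros]:
  "continuous_on S f \<Longrightarrow> continuous_on S (\<lambda>s. quad_form A (f s))"
  unfolding quad_form_def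
  by (intro continuous_intros bounded_linear.continuous_on[OF matrix_vector_mul_bounded_linear])

lemma quad_form_edge_identity:
  fixes A :: "real^'n^'n"
  assumes "transpose A = A"
  shows "a \<bullet> (A *v (b - a)) + (quad_form A c - quad_form A b) / 2
    = (quad_form A c - quad_form A a) / 2 - quad_form A (a - b) / 2"
proof -
  have "a \<bullet> (A *v (b - a)) = a \<bullet> (A *v b) - quad_form A a"
    by (simp add: quad_form_def matrix_vector_mult_diff_distrib inner_diff_right)
  then show ?thesis
    unfolding quad_form_diff[OF assms] by (simp add: field_simps)
qed

lemma quad_form_nonneg: "sym_pos_def_mat A \<Longrightarrow> 0 \<le> quad_form A v"
  by (cases "v = 0") (auto simp: quad_form_def sym_pos_def_mat_def less_imp_le)

lemma sym_pos_def_mat_coercive: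
  fixes A :: "real^'n^'n"
  assumes "sym_pos_def_mat A"
  shows "\<exists>c>0. \<forall>v. c * (v \<bullet> v) \<le> quad_form A v"
proof -
  obtain w :: "real^'n" where "norm w = 1" using vector_choose_size[of 1] by auto
  then obtain u where u: "u \<in> sphere 0 1" and u_min: "\<forall>v\<in>sphere 0 1. quad_form A u \<le> quad_form A v"
    using continuous_attains_inf[OF compact_sphere _ continuous_on_quad_form[OF continuous_on_id]]
    by (metis dist_0_norm empty_iff mem_sphere)
  have "u \<noteq> 0" using u by auto
  then have "0 < quad_form A u"
    using assms by (simp add: sym_pos_def_mat_def quad_form_def)
  moreover have "quad_form A u * (v \<bullet> v) \<le> quad_form A v" for v
  proof (cases "v = 0")
    case False
    then have "(1 / norm v) *\<^sub>R v \<in> sphere 0 1" by simp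
    then have "quad_form A u \<le> (1 / norm v)\<^sup>2 * quad_form A v"
      using u_min by (metis quad_form_scaleR)
    then show ?thesis
      using False by (simp add: power2_norm_eq_inner[symmetric] field_simps)
  qed (simp add: quad_form_def)
  ultimately show ?thesis by blast
qed

lemma quad_form_bounded:
  fixes A :: "real^'n^'n"
  shows "\<exists>C>0. \<forall>v. quad_form A v \<le> C * (v \<bullet> v)"
proof -
  obtain C where C: "C > 0" "\<And>v. norm (A *v v) \<le> norm v * C"
    using bounded_linear.pos_bounded[OF matrix_vector_mul_bounded_linear[of A]] by blast
  have "quad_form A v \<le> C * (v \<bullet> v)" for v
  proof -
    have "quad_form A v \<le> norm v * norm (A *v v)"
      unfolding quad_form_def by (rule norm_cauchy_schwarz)
    also have "\<dots> \<le> norm v * (norm v * C)" by (simp add: C(2) mult_left_mono)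
    finally show ?thesis by (simp add: power2_norm_eq_inner[symmetric] power2_eq_square ac_simps)
  qed
  with C(1) show ?thesis by blast
qed

lemma quad_form_uniformly_coercive:
  fixes M :: "(real^'n^'n) set"
  assumes "finite M" "\<forall>A\<in>M. sym_pos_def_mat A"
  shows "\<exists>c>0. \<forall>A\<in>M. \<forall>v. c * (v \<bullet> v) \<le> quad_form A v"
proof -
  have "\<forall>A\<in>M. \<forall>\<^sub>F c in at_right 0. \<forall>v. c * (v \<bullet> v) \<le> quad_form A v"
  proof
    fix A assume "A \<in> M"
    then obtain c where "c > 0" "\<forall>v. c * (v \<bullet> v) \<le> quad_form A v"
      using assms(2) sym_pos_def_mat_coercive by blast
    then show "\<forall>\<^sub>F c in at_right 0. \<forall>v. c * (v \<bullet> v) \<le> quad_form A v"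
      unfolding eventually_at_right_field
      by (metis order.trans inner_ge_zero less_eq_real_def mult_right_mono)
  qed
  then have "\<forall>\<^sub>F c in at_right 0. c > 0 \<and> (\<forall>A\<in>M. \<forall>v. c * (v \<bullet> v) \<le> quad_form A v)"
    by (intro eventually_conj eventually_at_right_less eventually_ball_finite assms(1))
  then show ?thesis
    using eventually_happens'[OF trivial_limit_at_right_real] by blast
qed

lemma quad_form_uniformly_bounded:
  fixes M :: "(real^'n^'n) set"
  assumes "finite M"
  shows "\<exists>C>0. \<forall>A\<in>M. \<forall>v. quad_form A v \<le> C * (v \<bullet> v)"
proof -
  have "\<forall>A\<in>M. \<forall>\<^sub>F C in at_top. \<forall>v. quad_form A v \<le> C * (v \<bullet> v)"
  proof
    fix A :: "real^'n^'n"
    obtain C where "\<forall>v. quad_form A v \<le> C * (v \<bullet> v)"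
      using quad_form_bounded by blast
    then show "\<forall>\<^sub>F C in at_top. \<forall>v. quad_form A v \<le> C * (v \<bullet> v)"
      unfolding eventually_at_top_linorder
      by (metis order.trans inner_ge_zero mult_right_mono)
  qed
  then have "\<forall>\<^sub>F C in at_top. C > 0 \<and> (\<forall>A\<in>M. \<forall>v. quad_form A v \<le> C * (v \<bullet> v))"
    by (intro eventually_conj eventually_gt_at_top eventually_ball_finite assms)
  then show ?thesis
    using eventually_happens'[OF trivial_limit_at_top_linorder] by blast
qed

section \<open>Real analysis\<close>

lemma inner_self_half_has_real_derivative:
  fixes f :: "real \<Rightarrow> 'a::real_inner"
  assumes "(f has_vector_derivative f') (at t)"
  shows "((\<lambda>t. f t \<bullet> f t / 2) has_real_derivative f t \<bullet> f') (at t)"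
proof -
  have "((\<lambda>t. f t \<bullet> f t) has_derivative (\<lambda>h. f t \<bullet> (h *\<^sub>R f') + (h *\<^sub>R f') \<bullet> f t)) (at t)"
    using assms unfolding has_vector_derivative_def by (intro has_derivative_inner)
  then have "((\<lambda>t. f t \<bullet> f t) has_real_derivative 2 * (f t \<bullet> f')) (at t)"
    unfolding has_field_derivative_def
    by (rule has_derivative_eq_rhs) (auto simp: inner_commute algebra_simps)
  from DERIV_cdivide[OF this, of 2] show ?thesis by simp
qed

lemma integral_sliding_window_has_real_derivative:
  fixes f :: "real \<Rightarrow> real"
  assumes f: "continuous_on UNIV f" and "c \<ge> 0"
  shows "((\<lambda>u. integral {u - c..u} f) has_real_derivative f t - f (t - c)) (at t)"
proof -
  define a where "a = t - c - 1"
  define G where "G u = integral {a..u} f" for u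
  have G_deriv: "(G has_real_derivative f x) (at x)" if "x > a" for x
  proof -
    have "(G has_real_derivative f x) (at x within {a..x+1})"
      unfolding G_def
      by (rule integral_has_real_derivative) (use that continuous_on_subset[OF f] in auto)
    moreover have "at x within {a..x+1} = at x" using that by (intro at_within_Icc_at) auto
    ultimately show ?thesis by simp
  qed
  have "((\<lambda>u. G u - G (u - c)) has_real_derivative f t - f (t - c) * 1) (at t)"
    using \<open>c \<ge> 0\<close> by (intro DERIV_diff G_deriv DERIV_chain2[OF G_deriv])
      (auto intro!: derivative_eq_intros simp: a_def)
  then have "((\<lambda>u. G u - G (u - c)) has_real_derivative f t - f (t - c)) (at t)" by simp
  then show ?thesis
  proof (rule has_field_derivative_transform_within_open[where S = "{a + c<..}"])
    fix u assume "u \<in> {a + c<..}"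
    then show "G u - G (u - c) = integral {u - c..u} f"
      using \<open>c \<ge> 0\<close> Henstock_Kurzweil_Integration.integral_combine[where a = a and c = "u - c" and b = u and f = f]
        integrable_continuous_real[OF continuous_on_subset[OF f]]
      by (simp add: G_def)
  qed (auto simp: a_def)
qed

lemma integral_delay:
  fixes f :: "real \<Rightarrow> real"
  shows "integral {a..b} (\<lambda>t. f (t - c)) = integral {a - c..b - c} f"
  using integral_shift_Icc_real[of a b f "- c"] by (simp add: o_def)

lemma integral_Icc_mono_nonneg:
  fixes f :: "real \<Rightarrow> real"
  assumes "continuous_on UNIV f" "\<And>x. 0 \<le> f x" "c \<le> a" "b \<le> d"
  shows "integral {a..b} f \<le> integral {c..d} f"
  using assms
  by (intro integral_subset_le integrable_continuous_real continuous_on_subset[OF assms(1)]) auto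

lemma inner_self_le_twice:
  fixes a b :: "'a::real_inner"
  shows "b \<bullet> b \<le> 2 * (a \<bullet> a) + 2 * ((a - b) \<bullet> (a - b))"
proof -
  have "0 \<le> (2 *\<^sub>R a - b) \<bullet> (2 *\<^sub>R a - b)" by simp
  then show ?thesis by (simp add: inner_diff_left inner_diff_right inner_commute algebra_simps)
qed

lemma ex_mult_le_integral:
  fixes f :: "real \<Rightarrow> real"
  assumes "continuous_on {c..d} f" "c \<le> d"
  shows "\<exists>s\<in>{c..d}. (d - c) * f s \<le> integral {c..d} f"
proof -
  obtain s where s: "s \<in> {c..d}" "\<And>t. t \<in> {c..d} \<Longrightarrow> f s \<le> f t"
    using continuous_attains_inf[OF compact_Icc _ assms(1)] assms(2) by auto
  have "(d - c) * f s = integral {c..d} (\<lambda>_. f s)" using assms(2) by simp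
  also have "\<dots> \<le> integral {c..d} f"
    using s(2) by (intro integral_le integrable_continuous_real assms(1)) auto
  finally show ?thesis using s(1) by blast
qed

lemma tendsto_powr_at_top_0:
  fixes \<rho> :: real
  assumes "0 < \<rho>" "\<rho> < 1"
  shows "((\<lambda>t. \<rho> powr t) \<longlongrightarrow> 0) at_top"
proof -
  have "((\<lambda>t. exp t powr ln \<rho>) \<longlongrightarrow> 0) at_top"
    using assms by (intro tendsto_neg_powr exp_at_top) simp
  moreover have "exp t powr ln \<rho> = \<rho> powr t" for t
    using assms by (simp add: powr_def mult.commute)
  ultimately show ?thesis by simp
qed

lemma contracting_imp_exponential_bound:
  fixes f :: "real \<Rightarrow> real"
  assumes antimono: "\<And>s t. 0 \<le> s \<Longrightarrow> s \<le> t \<Longrightarrow> f t \<le> f s"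
    and nonneg: "0 \<le> f 0"
    and \<theta>: "0 < \<theta>" "\<theta> < 1" and L: "0 < L"
    and contracts: "\<And>t. 0 \<le> t \<Longrightarrow> f (t + L) \<le> \<theta> * f t"
  shows "\<exists>C \<sigma>. 0 < \<sigma> \<and> \<sigma> < 1 \<and> (\<forall>t\<ge>0. f t \<le> C * \<sigma> powr t)"
proof -
  have steps: "f (real k * L) \<le> \<theta> ^ k * f 0" for k
  proof (induction k)
    case (Suc k)
    have "f (real (Suc k) * L) \<le> \<theta> * f (real k * L)"
      using contracts[of "real k * L"] L by (simp add: algebra_simps)
    also have "\<dots> \<le> \<theta> * (\<theta> ^ k * f 0)" using Suc \<theta>(1) by simp
    finally show ?case by simp
  qed simp
  define \<sigma> where "\<sigma> = \<theta> powr (1 / L)"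
  have "f t \<le> f 0 / \<theta> * \<sigma> powr t" if "t \<ge> 0" for t
  proof -
    define k where "k = nat \<lfloor>t / L\<rfloor>"
    have "real k \<le> t / L" "t / L - 1 \<le> real k"
      using that L unfolding k_def by simp linarith
    then have k: "real k * L \<le> t" "t / L - 1 \<le> real k"
      using L by (simp_all add: field_simps)
    have "f t \<le> f (real k * L)" using k L by (intro antimono) auto
    also have "\<dots> \<le> \<theta> powr real k * f 0" using steps \<theta>(1) by (simp add: powr_realpow)
    also have "\<dots> \<le> \<theta> powr (t / L - 1) * f 0"
      using k \<theta> nonneg by (intro mult_right_mono powr_mono') auto
    also have "\<dots> = f 0 / \<theta> * \<sigma> powr t"
      using \<theta>(1) by (simp add: \<sigma>_def powr_diff powr_powr)
    finally show ?thesis .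
  qed
  moreover have "0 < \<sigma>" "\<sigma> < 1" using \<theta> L by (auto simp: \<sigma>_def powr01_less_one)
  ultimately show ?thesis by blast
qed

text \<open>If \<open>x\<close> is exponentially close to its own translate by \<open>P\<close>, the telescoping series
  \<open>p t = x t + \<Sum>k. (x (t + (k + 1) P) - x (t + k P))\<close> is a \<open>P\<close>-periodic asymptote of \<open>x\<close>.\<close>
lemma ex_periodic_asymptote:
  fixes x :: "real \<Rightarrow> 'a::banach"
  assumes P: "P > 0" and \<rho>: "0 < \<rho>" "\<rho> < 1"
    and close: "\<And>t. 0 \<le> t \<Longrightarrow> norm (x (t + P) - x t) \<le> C * \<rho> powr t"
  shows "\<exists>p. (\<forall>t. p (t + P) = p t) \<and> ((\<lambda>t. x t - p t) \<longlongrightarrow> 0) at_top"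
proof -
  define d where "d s = x (s + P) - x s" for s
  define q where "q = \<rho> powr P"
  have q: "0 < q" "q < 1" using \<rho> P by (auto simp: q_def powr01_less_one)
  have d_bound: "norm (d (t + real k * P)) \<le> C * \<rho> powr t * q ^ k" if "0 \<le> t + real k * P" for t k
  proof -
    have "\<rho> powr (t + real k * P) = \<rho> powr t * q ^ k"
      using \<rho>(1) by (simp add: q_def powr_add powr_powr mult.commute flip: powr_realpow)
    then show ?thesis using close[OF that] by (simp add: d_def)
  qed
  have geometric: "summable (\<lambda>k. c * q ^ k)" for c
    using q by (intro summable_mult summable_geometric) auto
  have summable: "summable (\<lambda>k. d (t + real k * P))" for t
  proof -
    obtain k0 :: nat where k0: "- t < real k0 * P" using ex_less_of_nat_mult[OF P] by blast
    show ?thesis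
    proof (rule summable_comparison_test'[OF geometric[of "C * \<rho> powr t"], of k0])
      fix k assume "k0 \<le> k"
      then have "real k0 * P \<le> real k * P" using P by (intro mult_right_mono) auto
      then show "norm (d (t + real k * P)) \<le> C * \<rho> powr t * q ^ k"
        using k0 by (intro d_bound) linarith
    qed
  qed
  define p where "p t = x t + (\<Sum>k. d (t + real k * P))" for t
  have "p (t + P) = p t" for t
  proof -
    have "(\<Sum>k. d (t + P + real k * P)) = (\<Sum>k. d (t + real (Suc k) * P))"
      by (simp add: algebra_simps)
    also have "\<dots> = (\<Sum>k. d (t + real k * P)) - d t"
      using suminf_split_head[OF summable[of t]] by simp
    finally show ?thesis by (simp add: p_def d_def)
  qed
  moreover have "((\<lambda>t. x t - p t) \<longlongrightarrow> 0) at_top"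
  proof (rule Lim_null_comparison)
    have "norm (x t - p t) \<le> C / (1 - q) * \<rho> powr t" if "t \<ge> 0" for t
    proof -
      have "norm (x t - p t) = norm (\<Sum>k. d (t + real k * P))" by (simp add: p_def)
      also have "\<dots> \<le> (\<Sum>k. C * \<rho> powr t * q ^ k)"
        using that P by (intro norm_suminf_le[OF _ geometric] d_bound) simp
      also have "\<dots> = C / (1 - q) * \<rho> powr t"
        using q by (simp add: suminf_mult summable_geometric suminf_geometric)
      finally show ?thesis .
    qed
    then show "\<forall>\<^sub>F t in at_top. norm (x t - p t) \<le> C / (1 - q) * \<rho> powr t"
      by (intro eventually_at_top_linorder[THEN iffD2]) blast
    show "((\<lambda>t. C / (1 - q) * \<rho> powr t) \<longlongrightarrow> 0) at_top"
      by (intro tendsto_mult_right_zero tendsto_powr_at_top_0 \<rho>)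
  qed
  ultimately show ?thesis by blast
qed

section \<open>Cancellation along the links of the network\<close>

lemma ring_edges_subset: "ring_edges r \<subseteq> set r \<times> set r"
  by (auto simp: ring_edges_def intro!: nth_mem mod_less_divisor)

lemma sum_ring_edges_diff_eq_0:
  fixes z :: "nat \<Rightarrow> 'a::ab_group_add"
  assumes "distinct r"
  shows "(\<Sum>(j,i)\<in>ring_edges r. z j - z i) = 0"
proof -
  let ?l = "length r"
  define G where "G k = z (r ! (k mod ?l))" for k
  have "inj_on (\<lambda>k. (r ! k, r ! ((k + 1) mod ?l))) {..<?l}"
    using assms by (auto simp: inj_on_def nth_eq_iff_index_eq)
  moreover have "ring_edges r = (\<lambda>k. (r ! k, r ! ((k + 1) mod ?l))) ` {..<?l}"
    by (auto simp: ring_edges_def)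
  ultimately have "(\<Sum>(j,i)\<in>ring_edges r. z j - z i) = (\<Sum>k<?l. G k - G (Suc k))"
    by (simp add: sum.reindex G_def)
  also have "\<dots> = G 0 - G ?l"
    by (rule sum_lessThan_telescope')
  also have "\<dots> = 0" by (simp add: G_def)
  finally show ?thesis .
qed

locale follower_network =
  fixes n :: nat and N :: "nat \<Rightarrow> nat set" and K :: "nat \<Rightarrow> nat \<Rightarrow> real^'m^'m"
    and T :: "nat \<Rightarrow> nat \<Rightarrow> real" and g :: "nat \<Rightarrow> real"
  assumes neighbours: "\<forall>i\<in>{1..n}. N i \<subseteq> {1..n} - {i}"
    and gains_pd: "\<forall>i\<in>{1..n}. \<forall>j\<in>N i. sym_pos_def_mat (K j i)"
    and leader_gains_pd: "\<forall>i\<in>{1..n}. g i = 1 \<longrightarrow> sym_pos_def_mat (K 0 i)"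
    and pinning: "\<forall>i\<in>{1..n}. g i \<in> {0, 1}"
    and delays_nonneg: "\<forall>i\<in>{1..n}. (\<forall>j\<in>N i. T j i \<ge> 0) \<and> T 0 i \<ge> 0"
    and connected: "net_connected n N g"
    and ring_structure: "links_ok n N K"
begin

lemma neighbour_follower: "i \<in> {1..n} \<Longrightarrow> j \<in> N i \<Longrightarrow> j \<in> {1..n}"
  using neighbours by blast

lemma finite_neighbours: "i \<in> {1..n} \<Longrightarrow> finite (N i)"
  using neighbours finite_subset[of "N i" "{1..n}"] by blast

lemma gain_sym: "i \<in> {1..n} \<Longrightarrow> j \<in> N i \<Longrightarrow> transpose (K j i) = K j i"
  using gains_pd by (auto simp: sym_pos_def_mat_def)

lemma delay_nonneg: "i \<in> {1..n} \<Longrightarrow> j \<in> N i \<Longrightarrow> 0 \<le> T j i"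
  using delays_nonneg by blast

definition follower_links :: "(nat \<times> nat) set" where
  "follower_links = {(j, i). i \<in> {1..n} \<and> j \<in> N i}"

lemma follower_links_eq: "follower_links = prod.swap ` Sigma {1..n} N"
  by (auto simp: follower_links_def)

lemma finite_follower_links: "finite follower_links"
  unfolding follower_links_eq using finite_neighbours by (intro finite_imageI finite_SigmaI) auto

lemma sum_follower_links:
  "(\<Sum>i\<in>{1..n}. \<Sum>j\<in>N i. F j i) = (\<Sum>(j,i)\<in>follower_links. F j i)"
  unfolding follower_links_eq
  by (simp add: sum.Sigma finite_neighbours sum.reindex case_prod_unfold)

definition bidirectional_links :: "(nat \<times> nat) set" where
  "bidirectional_links = {(j, i) \<in> follower_links. (i, j) \<in> follower_links}"

definition unidirectional_links :: "(nat \<times> nat) set" where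
  "unidirectional_links = {(j, i) \<in> follower_links. (i, j) \<notin> follower_links}"

lemma unidirectional_link_iff:
  "(j, i) \<in> unidirectional_links \<longleftrightarrow> i \<in> {1..n} \<and> unidir_link N j i"
  unfolding unidirectional_links_def follower_links_def unidir_link_def using neighbour_follower by blast

lemma bidirectional_gain_sym:
  "i \<in> {1..n} \<Longrightarrow> j \<in> N i \<Longrightarrow> i \<in> N j \<Longrightarrow> K j i = K i j"
  using ring_structure unfolding links_ok_def by blast

lemma sum_bidirectional_links_eq_0:
  fixes \<phi> :: "real^'m^'m \<Rightarrow> nat \<Rightarrow> real"
  shows "(\<Sum>(j,i)\<in>bidirectional_links. \<phi> (K j i) j - \<phi> (K j i) i) = 0"
    (is "(\<Sum>(j,i)\<in>_. ?f j i) = 0")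
proof -
  have "(\<Sum>(j,i)\<in>bidirectional_links. ?f j i) = (\<Sum>(j,i)\<in>bidirectional_links. ?f i j)"
    by (rule sum.reindex_bij_witness[where i = prod.swap and j = prod.swap])
      (auto simp: bidirectional_links_def)
  also have "\<dots> = - (\<Sum>(j,i)\<in>bidirectional_links. ?f j i)"
    unfolding sum_negf[symmetric]
  proof (rule sum.cong[OF refl], clarify)
    fix j i assume "(j, i) \<in> bidirectional_links"
    then have "K i j = K j i"
      by (simp add: bidirectional_links_def follower_links_def bidirectional_gain_sym)
    then show "?f i j = - ?f j i" by simp
  qed
  finally show ?thesis by simp
qed

lemma ring_decomposition:
  obtains Rs :: "nat list list" where
    "\<And>r. r \<in> set Rs \<Longrightarrow> distinct r \<and> (\<exists>A. \<forall>(j,i)\<in>ring_edges r. K j i = A)"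
    "\<And>k. k < length Rs \<Longrightarrow> ring_edges (Rs ! k) \<subseteq> unidirectional_links"
    "\<And>l. l \<in> unidirectional_links \<Longrightarrow> \<exists>!k. k < length Rs \<and> l \<in> ring_edges (Rs ! k)"
proof -
  obtain Rs :: "nat list list" where
    rings: "\<forall>r\<in>set Rs. distinct r \<and> length r \<ge> 2 \<and> set r \<subseteq> {1..n} \<and>
      (\<forall>(j,i)\<in>ring_edges r. unidir_link N j i) \<and> (\<exists>A. \<forall>(j,i)\<in>ring_edges r. K j i = A)"
    and unique: "\<forall>i\<in>{1..n}. \<forall>j. unidir_link N j i \<longrightarrow>
      (\<exists>!k. k < length Rs \<and> (j,i) \<in> ring_edges (Rs ! k))"
    using ring_structure unfolding links_ok_def by blast
  show ?thesis
  proof (rule that)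
    show "\<And>r. r \<in> set Rs \<Longrightarrow> distinct r \<and> (\<exists>A. \<forall>(j,i)\<in>ring_edges r. K j i = A)"
      using rings by simp
  next
    fix k assume "k < length Rs"
    then have "set (Rs ! k) \<subseteq> {1..n}" "\<forall>(j,i)\<in>ring_edges (Rs ! k). unidir_link N j i"
      using bspec[OF rings nth_mem] by simp_all
    then show "ring_edges (Rs ! k) \<subseteq> unidirectional_links"
      using ring_edges_subset[of "Rs ! k"] unidirectional_link_iff by blast
  next
    fix l assume "l \<in> unidirectional_links"
    moreover obtain j i where "l = (j, i)" by fastforce
    ultimately show "\<exists>!k. k < length Rs \<and> l \<in> ring_edges (Rs ! k)"
      using unique by (simp add: unidirectional_link_iff)
  qed
qed

lemma sum_unidirectional_links_eq_0:
  fixes \<phi> :: "real^'m^'m \<Rightarrow> nat \<Rightarrow> real"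
  shows "(\<Sum>(j,i)\<in>unidirectional_links. \<phi> (K j i) j - \<phi> (K j i) i) = 0"
proof -
  obtain Rs where rings: "\<And>r. r \<in> set Rs \<Longrightarrow> distinct r \<and> (\<exists>A. \<forall>(j,i)\<in>ring_edges r. K j i = A)"
    and ring_links: "\<And>k. k < length Rs \<Longrightarrow> ring_edges (Rs ! k) \<subseteq> unidirectional_links"
    and unique: "\<And>l. l \<in> unidirectional_links \<Longrightarrow> \<exists>!k. k < length Rs \<and> l \<in> ring_edges (Rs ! k)"
    using ring_decomposition by blast
  have cover: "unidirectional_links = (\<Union>k<length Rs. ring_edges (Rs ! k))"
  proof
    show "unidirectional_links \<subseteq> (\<Union>k<length Rs. ring_edges (Rs ! k))"
      using unique by (fastforce dest: ex1_implies_ex)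
  qed (use ring_links in auto)
  have disjoint: "\<forall>k\<in>{..<length Rs}. \<forall>k'\<in>{..<length Rs}. k \<noteq> k' \<longrightarrow>
       ring_edges (Rs ! k) \<inter> ring_edges (Rs ! k') = {}"
  proof (intro ballI impI equals0I)
    fix k k' l assume k: "k \<in> {..<length Rs}" "k' \<in> {..<length Rs}" "k \<noteq> k'"
      and l: "l \<in> ring_edges (Rs ! k) \<inter> ring_edges (Rs ! k')"
    then have "l \<in> unidirectional_links" using ring_links by blast
    from unique[OF this] show False using k l by blast
  qed
  have ring_sum: "(\<Sum>(j,i)\<in>ring_edges r. \<phi> (K j i) j - \<phi> (K j i) i) = 0" if r: "r \<in> set Rs" for r
  proof -
    obtain A where A: "\<forall>(j,i)\<in>ring_edges r. K j i = A" using rings[OF r] by blast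
    have "(\<Sum>(j,i)\<in>ring_edges r. \<phi> (K j i) j - \<phi> (K j i) i) = (\<Sum>(j,i)\<in>ring_edges r. \<phi> A j - \<phi> A i)"
      using A by (intro sum.cong) auto
    also have "\<dots> = 0" using rings[OF r] by (intro sum_ring_edges_diff_eq_0) auto
    finally show ?thesis .
  qed
  have "finite (ring_edges r)" for r
    using finite_subset[OF ring_edges_subset] by blast
  then show ?thesis
    unfolding cover using disjoint ring_sum by (subst sum.UNION_disjoint) auto
qed

lemma sum_neighbour_differences_eq_0:
  fixes \<phi> :: "real^'m^'m \<Rightarrow> nat \<Rightarrow> real"
  shows "(\<Sum>i\<in>{1..n}. \<Sum>j\<in>N i. \<phi> (K j i) j - \<phi> (K j i) i) = 0"
proof -
  let ?f = "\<lambda>(j,i). \<phi> (K j i) j - \<phi> (K j i) i"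
  have "follower_links = bidirectional_links \<union> unidirectional_links"
    by (auto simp: bidirectional_links_def unidirectional_links_def)
  moreover have "finite bidirectional_links" "finite unidirectional_links"
    by (rule finite_subset[OF _ finite_follower_links];
        auto simp: bidirectional_links_def unidirectional_links_def)+
  moreover have "bidirectional_links \<inter> unidirectional_links = {}"
    by (auto simp: bidirectional_links_def unidirectional_links_def)
  ultimately have "sum ?f follower_links = sum ?f bidirectional_links + sum ?f unidirectional_links"
    by (simp add: sum.union_disjoint)
  then show ?thesis
    by (simp only: sum_follower_links sum_bidirectional_links_eq_0 sum_unidirectional_links_eq_0)
qed

section \<open>The Lyapunov--Krasovskii functional\<close>

definition error_rhs :: "(nat \<Rightarrow> real \<Rightarrow> real^'m) \<Rightarrow> nat \<Rightarrow> real \<Rightarrow> real^'m" where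
  "error_rhs e i t = (\<Sum>j\<in>N i. K j i *v (e j (t - T j i) - e i t)) - g i *\<^sub>R (K 0 i *v e i t)"

definition error_solution :: "(nat \<Rightarrow> real \<Rightarrow> real^'m) \<Rightarrow> bool" where
  "error_solution e \<longleftrightarrow> (\<forall>i\<in>{1..n}. continuous_on UNIV (e i) \<and>
     (\<forall>t>0. (e i has_vector_derivative error_rhs e i t) (at t)))"

definition energy :: "(nat \<Rightarrow> real \<Rightarrow> real^'m) \<Rightarrow> real \<Rightarrow> real" where
  "energy e t = (\<Sum>i\<in>{1..n}. e i t \<bullet> e i t / 2)
     + (\<Sum>i\<in>{1..n}. \<Sum>j\<in>N i. integral {t - T j i..t} (\<lambda>s. quad_form (K j i) (e j s)) / 2)"

definition dissipation :: "(nat \<Rightarrow> real \<Rightarrow> real^'m) \<Rightarrow> real \<Rightarrow> real" where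
  "dissipation e t = (\<Sum>i\<in>{1..n}. \<Sum>j\<in>N i. quad_form (K j i) (e i t - e j (t - T j i)) / 2)
     + (\<Sum>i\<in>{1..n}. g i * quad_form (K 0 i) (e i t))"

lemma error_solution_continuous_on:
  "error_solution e \<Longrightarrow> i \<in> {1..n} \<Longrightarrow> continuous_on S (e i)"
  unfolding error_solution_def using continuous_on_subset by blast

lemma error_solution_continuous_on_delayed:
  "error_solution e \<Longrightarrow> i \<in> {1..n} \<Longrightarrow> continuous_on S (\<lambda>t. e i (t - c))"
  using continuous_on_compose2[OF error_solution_continuous_on[of e i UNIV], of S "\<lambda>t. t - c"]
    continuous_on_diff[OF continuous_on_id continuous_on_const]
  by blast

lemma isCont_delay_integral:
  assumes "error_solution e" "i \<in> {1..n}" "j \<in> N i"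
  shows "isCont (\<lambda>u. integral {u - T j i..u} (\<lambda>s. quad_form (K j i) (e j s))) t"
proof -
  have "continuous_on UNIV (\<lambda>s. quad_form (K j i) (e j s))"
    using assms neighbour_follower by (intro continuous_on_quad_form error_solution_continuous_on)
  from integral_sliding_window_has_real_derivative[OF this delay_nonneg[OF assms(2,3)]]
  show ?thesis by (rule DERIV_isCont)
qed

text \<open>The delay integrals in the energy turn the delayed terms of its derivative into
  differences of potentials along the links, which cancel by
  \<open>sum_neighbour_differences_eq_0\<close>.\<close>
lemma energy_has_real_derivative:
  assumes e: "error_solution e" and "t > 0"
  shows "(energy e has_real_derivative - dissipation e t) (at t)"
proof -
  have e_deriv: "(e i has_vector_derivative error_rhs e i t) (at t)" if "i \<in> {1..n}" for i
    using e that \<open>t > 0\<close> by (auto simp: error_solution_def)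
  define D where "D = (\<Sum>i\<in>{1..n}. e i t \<bullet> error_rhs e i t)
     + (\<Sum>i\<in>{1..n}. \<Sum>j\<in>N i. (quad_form (K j i) (e j t) - quad_form (K j i) (e j (t - T j i))) / 2)"
  have "(energy e has_real_derivative D) (at t)"
    unfolding energy_def[abs_def] D_def
  proof (intro DERIV_add DERIV_sum)
    fix i assume i: "i \<in> {1..n}"
    show "((\<lambda>u. e i u \<bullet> e i u / 2) has_real_derivative e i t \<bullet> error_rhs e i t) (at t)"
      using e_deriv[OF i] by (rule inner_self_half_has_real_derivative)
    fix j assume j: "j \<in> N i"
    have "continuous_on UNIV (\<lambda>s. quad_form (K j i) (e j s))"
      using e i j neighbour_follower by (intro continuous_on_quad_form error_solution_continuous_on)
    from integral_sliding_window_has_real_derivative[OF this delay_nonneg[OF i j]]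
    show "((\<lambda>u. integral {u - T j i..u} (\<lambda>s. quad_form (K j i) (e j s)) / 2) has_real_derivative
        (quad_form (K j i) (e j t) - quad_form (K j i) (e j (t - T j i))) / 2) (at t)"
      by (rule DERIV_cdivide)
  qed
  moreover have "D = - dissipation e t"
  proof -
    let ?Q = "\<lambda>i j v. quad_form (K j i) v"
    have "D = (\<Sum>i\<in>{1..n}. (\<Sum>j\<in>N i. e i t \<bullet> (K j i *v (e j (t - T j i) - e i t))
                 + (?Q i j (e j t) - ?Q i j (e j (t - T j i))) / 2) - g i * ?Q i 0 (e i t))"
      unfolding D_def sum.distrib[symmetric]
      by (rule sum.cong) (auto simp: error_rhs_def inner_diff_right inner_sum_right sum.distrib quad_form_def)
    also have "\<dots> = (\<Sum>i\<in>{1..n}. (\<Sum>j\<in>N i. (?Q i j (e j t) - ?Q i j (e i t)) / 2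
                 - ?Q i j (e i t - e j (t - T j i)) / 2) - g i * ?Q i 0 (e i t))"
      by (intro sum.cong refl arg_cong2[where f = "(-)"] quad_form_edge_identity gain_sym) auto
    also have "\<dots> = - dissipation e t
        + (\<Sum>i\<in>{1..n}. \<Sum>j\<in>N i. (?Q i j (e j t) - ?Q i j (e i t)) / 2)"
      by (simp add: dissipation_def sum.distrib sum_subtractf sum_negf)
    also have "(\<Sum>i\<in>{1..n}. \<Sum>j\<in>N i. (?Q i j (e j t) - ?Q i j (e i t)) / 2) = 0"
      using sum_neighbour_differences_eq_0[of "\<lambda>A j. quad_form A (e j t)"]
      by (simp add: sum_divide_distrib[symmetric])
    finally show ?thesis by simp
  qed
  ultimately show ?thesis by simp
qed

lemma continuous_on_energy:
  assumes "error_solution e"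
  shows "continuous_on S (energy e)"
proof -
  have delay_integral: "continuous_on S (\<lambda>u. integral {u - T j i..u} (\<lambda>s. quad_form (K j i) (e j s)))"
    if "i \<in> {1..n}" "j \<in> N i" for i j
    using isCont_delay_integral[OF assms that] by (simp add: continuous_at_imp_continuous_on)
  show ?thesis
    unfolding energy_def[abs_def]
    by (intro continuous_on_add continuous_on_sum continuous_on_divide continuous_on_inner
        continuous_on_const delay_integral error_solution_continuous_on[OF assms]) auto
qed

lemma quad_form_gain_nonneg: "i \<in> {1..n} \<Longrightarrow> j \<in> N i \<Longrightarrow> 0 \<le> quad_form (K j i) v"
  using gains_pd quad_form_nonneg by blast

lemma quad_form_leader_gain_nonneg: "i \<in> {1..n} \<Longrightarrow> 0 \<le> g i * quad_form (K 0 i) v"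
  using pinning leader_gains_pd quad_form_nonneg by fastforce

lemma dissipation_nonneg: "0 \<le> dissipation e t"
  unfolding dissipation_def
  by (intro add_nonneg_nonneg sum_nonneg divide_nonneg_pos quad_form_gain_nonneg
      quad_form_leader_gain_nonneg) auto

lemma dissipation_has_integral:
  assumes e: "error_solution e" and "0 \<le> a" "a \<le> b"
  shows "(dissipation e has_integral energy e a - energy e b) {a..b}"
proof -
  have "((\<lambda>t. - dissipation e t) has_integral energy e b - energy e a) {a..b}"
  proof (rule fundamental_theorem_of_calculus_interior[OF \<open>a \<le> b\<close> continuous_on_energy[OF e]])
    fix t assume "t \<in> {a<..<b}"
    then show "(energy e has_vector_derivative - dissipation e t) (at t)"
      using energy_has_real_derivative[OF e] \<open>0 \<le> a\<close>
      by (simp add: has_real_derivative_iff_has_vector_derivative)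
  qed
  from has_integral_neg[OF this] show ?thesis by simp
qed

lemma energy_antimono:
  assumes "error_solution e" "0 \<le> s" "s \<le> t"
  shows "energy e t \<le> energy e s"
  using has_integral_nonneg[OF dissipation_has_integral[OF assms] dissipation_nonneg] by simp

lemma delay_integral_nonneg:
  assumes "error_solution e" "i \<in> {1..n}" "j \<in> N i"
  shows "0 \<le> integral {t - T j i..t} (\<lambda>s. quad_form (K j i) (e j s))"
proof -
  have "continuous_on {t - T j i..t} (e j)"
    using assms neighbour_follower error_solution_continuous_on by blast
  then have "(\<lambda>s. quad_form (K j i) (e j s)) integrable_on {t - T j i..t}"
    by (intro integrable_continuous_real continuous_on_quad_form)
  then show ?thesis
    using quad_form_gain_nonneg[OF assms(2,3)] by (simp add: Henstock_Kurzweil_Integration.integral_nonneg)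
qed

lemma energy_nonneg: "error_solution e \<Longrightarrow> 0 \<le> energy e t"
  unfolding energy_def
  by (intro add_nonneg_nonneg sum_nonneg divide_nonneg_pos delay_integral_nonneg) auto

lemma inner_self_half_le_energy:
  assumes e: "error_solution e" and "i \<in> {1..n}"
  shows "e i t \<bullet> e i t / 2 \<le> energy e t"
proof -
  have "e i t \<bullet> e i t / 2 \<le> (\<Sum>i\<in>{1..n}. e i t \<bullet> e i t / 2)"
    using \<open>i \<in> {1..n}\<close> by (intro member_le_sum) auto
  moreover have "0 \<le> (\<Sum>i\<in>{1..n}. \<Sum>j\<in>N i. integral {t - T j i..t} (\<lambda>s. quad_form (K j i) (e j s)) / 2)"
    by (intro sum_nonneg divide_nonneg_pos delay_integral_nonneg[OF e]) auto
  ultimately show ?thesis unfolding energy_def by linarith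
qed

section \<open>Exponential decay of the energy\<close>

abbreviation net_links :: "(nat \<times> nat) set" where
  "net_links \<equiv> net_edges n N g \<union> (net_edges n N g)\<inverse>"

lemma net_edgesE:
  assumes "(a, b) \<in> net_edges n N g"
  obtains "b \<in> {1..n}" "a \<in> N b" "a \<in> {1..n}" | "b \<in> {1..n}" "a = 0" "g b = 1"
  using assms neighbour_follower unfolding net_edges_def by blast

lemma finite_net_links: "finite net_links"
proof -
  have "(a, b) \<in> {0..n} \<times> {0..n}" if "(a, b) \<in> net_edges n N g" for a b
    using that by (cases rule: net_edgesE) auto
  then have "net_edges n N g \<subseteq> {0..n} \<times> {0..n}" by fast
  then have "finite (net_edges n N g)" by (rule finite_subset) simp
  then show ?thesis by simp
qed

lemma leader_link_pinned:
  assumes "(0, k) \<in> net_links" "k \<noteq> 0"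
  shows "k \<in> {1..n} \<and> g k = 1"
proof -
  have "(0, k) \<in> net_edges n N g" using assms by (auto elim: net_edgesE)
  then show ?thesis by (cases rule: net_edgesE) auto
qed

lemma leader_reaches_follower:
  assumes "k \<in> {1..n}"
  shows "\<exists>r\<le>card net_links. (0, k) \<in> net_links ^^ r"
proof -
  have "(0, k) \<in> net_links\<^sup>*"
    using connected assms by (auto simp: net_connected_def)
  then show ?thesis
    unfolding rtrancl_finite_eq_relpow[OF finite_net_links] by blast
qed

definition max_delay :: real where
  "max_delay = Max (insert 0 ((\<lambda>(i, j). T j i) ` Sigma {1..n} N))"

lemma max_delay_bounds: "0 \<le> max_delay" "i \<in> {1..n} \<Longrightarrow> j \<in> N i \<Longrightarrow> T j i \<le> max_delay"
proof -
  have "finite (insert 0 ((\<lambda>(i, j). T j i) ` Sigma {1..n} N))"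
    using finite_neighbours by (intro finite.insertI finite_imageI finite_SigmaI) auto
  then show "0 \<le> max_delay" "i \<in> {1..n} \<Longrightarrow> j \<in> N i \<Longrightarrow> T j i \<le> max_delay"
    unfolding max_delay_def by (auto intro!: Max_ge)
qed

lemma ex_gain_lower_bound:
  "\<exists>\<kappa>>0. (\<forall>i\<in>{1..n}. \<forall>j\<in>N i. \<forall>v. \<kappa> * (v \<bullet> v) \<le> quad_form (K j i) v)
     \<and> (\<forall>i\<in>{1..n}. g i = 1 \<longrightarrow> (\<forall>v. \<kappa> * (v \<bullet> v) \<le> quad_form (K 0 i) v))"
proof -
  define M where "M = (\<lambda>(i, j). K j i) ` Sigma {1..n} N \<union> (\<lambda>i. K 0 i) ` {i\<in>{1..n}. g i = 1}"
  have "finite M"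
    unfolding M_def using finite_neighbours by (intro finite_UnI finite_imageI finite_SigmaI) auto
  moreover have "\<forall>A\<in>M. sym_pos_def_mat A"
    unfolding M_def using gains_pd leader_gains_pd by auto
  ultimately obtain \<kappa> where "\<kappa> > 0" "\<forall>A\<in>M. \<forall>v. \<kappa> * (v \<bullet> v) \<le> quad_form A v"
    using quad_form_uniformly_coercive by blast
  moreover have "K j i \<in> M" if "i \<in> {1..n}" "j \<in> N i" for i j
    unfolding M_def using that by force
  moreover have "K 0 i \<in> M" if "i \<in> {1..n}" "g i = 1" for i
    unfolding M_def using that by force
  ultimately show ?thesis by (intro exI[of _ \<kappa>]) auto
qed

lemma ex_gain_upper_bound:
  "\<exists>\<Lambda>>0. \<forall>i\<in>{1..n}. \<forall>j\<in>N i. \<forall>v. quad_form (K j i) v \<le> \<Lambda> * (v \<bullet> v)"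
proof -
  define M where "M = (\<lambda>(i, j). K j i) ` Sigma {1..n} N"
  have "finite M"
    unfolding M_def using finite_neighbours by (intro finite_imageI finite_SigmaI) auto
  then obtain \<Lambda> where "\<Lambda> > 0" "\<forall>A\<in>M. \<forall>v. quad_form A v \<le> \<Lambda> * (v \<bullet> v)"
    using quad_form_uniformly_bounded by blast
  moreover have "K j i \<in> M" if "i \<in> {1..n}" "j \<in> N i" for i j
    unfolding M_def using that by force
  ultimately show ?thesis by (intro exI[of _ \<Lambda>]) auto
qed

context
  fixes e :: "nat \<Rightarrow> real \<Rightarrow> real^'m" and \<kappa> \<Lambda> h :: real
  assumes e: "error_solution e"
    and \<kappa>: "0 < \<kappa>"
    and gain_lower: "\<And>i j v. i \<in> {1..n} \<Longrightarrow> j \<in> N i \<Longrightarrow> \<kappa> * (v \<bullet> v) \<le> quad_form (K j i) v"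
    and leader_gain_lower: "\<And>i v. i \<in> {1..n} \<Longrightarrow> g i = 1 \<Longrightarrow> \<kappa> * (v \<bullet> v) \<le> quad_form (K 0 i) v"
    and \<Lambda>: "0 \<le> \<Lambda>"
    and gain_upper: "\<And>i j v. i \<in> {1..n} \<Longrightarrow> j \<in> N i \<Longrightarrow> quad_form (K j i) v \<le> \<Lambda> * (v \<bullet> v)"
    and h: "0 \<le> h"
    and delay_le: "\<And>i j. i \<in> {1..n} \<Longrightarrow> j \<in> N i \<Longrightarrow> T j i \<le> h"
begin

lemma continuous_on_state_sq: "k \<in> {1..n} \<Longrightarrow> continuous_on S (\<lambda>t. e k t \<bullet> e k t)"
  by (intro continuous_on_inner error_solution_continuous_on[OF e])

lemma continuous_on_delayed_state_sq:
  "k \<in> {1..n} \<Longrightarrow> continuous_on S (\<lambda>t. e k (t - c) \<bullet> e k (t - c))"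
  by (intro continuous_on_inner error_solution_continuous_on_delayed[OF e])

lemma continuous_on_mismatch_sq:
  "i \<in> {1..n} \<Longrightarrow> j \<in> {1..n} \<Longrightarrow>
    continuous_on S (\<lambda>t. (e i t - e j (t - c)) \<bullet> (e i t - e j (t - c)))"
  by (intro continuous_on_inner continuous_on_diff error_solution_continuous_on[OF e]
      error_solution_continuous_on_delayed[OF e])

lemma mismatch_le_dissipation:
  assumes i: "i \<in> {1..n}" and j: "j \<in> N i"
  shows "\<kappa> / 2 * ((e i t - e j (t - T j i)) \<bullet> (e i t - e j (t - T j i))) \<le> dissipation e t"
proof -
  let ?d = "\<lambda>i j. quad_form (K j i) (e i t - e j (t - T j i)) / 2"
  have "\<kappa> / 2 * ((e i t - e j (t - T j i)) \<bullet> (e i t - e j (t - T j i))) \<le> ?d i j"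
    using gain_lower[OF i j] by simp
  also have "\<dots> \<le> (\<Sum>j\<in>N i. ?d i j)"
    using j finite_neighbours[OF i] quad_form_gain_nonneg[OF i]
    by (intro member_le_sum divide_nonneg_pos) auto
  also have "\<dots> \<le> (\<Sum>i\<in>{1..n}. \<Sum>j\<in>N i. ?d i j)"
    using i quad_form_gain_nonneg by (intro member_le_sum sum_nonneg divide_nonneg_pos) auto
  also have "\<dots> \<le> dissipation e t"
  proof -
    have "0 \<le> (\<Sum>i\<in>{1..n}. g i * quad_form (K 0 i) (e i t))"
      by (intro sum_nonneg quad_form_leader_gain_nonneg) auto
    then show ?thesis unfolding dissipation_def by linarith
  qed
  finally show ?thesis .
qed

lemma leader_state_le_dissipation:
  assumes k: "k \<in> {1..n}" "g k = 1"
  shows "\<kappa> * (e k t \<bullet> e k t) \<le> dissipation e t"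
proof -
  have "\<kappa> * (e k t \<bullet> e k t) \<le> g k * quad_form (K 0 k) (e k t)"
    using leader_gain_lower[OF k] k by simp
  also have "\<dots> \<le> (\<Sum>i\<in>{1..n}. g i * quad_form (K 0 i) (e i t))"
    using k quad_form_leader_gain_nonneg by (intro member_le_sum) auto
  also have "\<dots> \<le> dissipation e t"
  proof -
    have "0 \<le> (\<Sum>i\<in>{1..n}. \<Sum>j\<in>N i. quad_form (K j i) (e i t - e j (t - T j i)) / 2)"
      by (intro sum_nonneg divide_nonneg_pos quad_form_gain_nonneg) auto
    then show ?thesis unfolding dissipation_def by linarith
  qed
  finally show ?thesis .
qed

lemma dissipation_integrable_on: "0 \<le> a \<Longrightarrow> dissipation e integrable_on {a..b}"
  using has_integral_integrable[OF dissipation_has_integral[OF e]] by (cases "a \<le> b") auto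

lemma integral_dissipation_le:
  assumes "0 \<le> a" "a \<le> b" "a \<le> \<alpha>" "\<beta> \<le> b"
  shows "integral {\<alpha>..\<beta>} (dissipation e) \<le> energy e a - energy e b"
proof -
  have "integral {\<alpha>..\<beta>} (dissipation e) \<le> integral {a..b} (dissipation e)"
    using assms
    by (intro integral_subset_le dissipation_integrable_on) (auto simp: dissipation_nonneg)
  also have "\<dots> = energy e a - energy e b"
    using assms by (intro integral_unique dissipation_has_integral[OF e])
  finally show ?thesis .
qed

lemma integral_mismatch_le:
  assumes i: "i \<in> {1..n}" and j: "j \<in> N i" and window: "0 \<le> a" "a \<le> b" "a \<le> \<alpha>" "\<beta> \<le> b"
  shows "integral {\<alpha>..\<beta>} (\<lambda>t. (e i t - e j (t - T j i)) \<bullet> (e i t - e j (t - T j i)))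
    \<le> 2 / \<kappa> * (energy e a - energy e b)"
proof -
  have "\<kappa> / 2 * integral {\<alpha>..\<beta>} (\<lambda>t. (e i t - e j (t - T j i)) \<bullet> (e i t - e j (t - T j i)))
      \<le> integral {\<alpha>..\<beta>} (dissipation e)"
    using window neighbour_follower[OF i j] mismatch_le_dissipation[OF i j]
    by (simp only: integral_mult_right[symmetric])
      (intro integral_le integrable_continuous_real continuous_on_mult continuous_on_const
        continuous_on_mismatch_sq i dissipation_integrable_on; simp)
  also have "\<dots> \<le> energy e a - energy e b"
    by (rule integral_dissipation_le[OF window])
  finally show ?thesis using \<kappa> by (simp add: field_simps)
qed

lemma integral_leader_state_le:
  assumes k: "k \<in> {1..n}" "g k = 1" and window: "0 \<le> a" "a \<le> b" "a \<le> \<alpha>" "\<beta> \<le> b"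
  shows "integral {\<alpha>..\<beta>} (\<lambda>t. e k t \<bullet> e k t) \<le> 1 / \<kappa> * (energy e a - energy e b)"
proof -
  have "\<kappa> * integral {\<alpha>..\<beta>} (\<lambda>t. e k t \<bullet> e k t) \<le> integral {\<alpha>..\<beta>} (dissipation e)"
    using window leader_state_le_dissipation[OF k]
    by (simp only: integral_mult_right[symmetric])
      (intro integral_le integrable_continuous_real continuous_on_mult continuous_on_const
        continuous_on_state_sq k(1) dissipation_integrable_on; simp)
  also have "\<dots> \<le> energy e a - energy e b"
    by (rule integral_dissipation_le[OF window])
  finally show ?thesis using \<kappa> by (simp add: field_simps)
qed

lemma integral_state_le_twice:
  assumes i: "i \<in> {1..n}" and j: "j \<in> N i"
  shows "integral {\<alpha>..\<beta>} (\<lambda>t. e j (t - T j i) \<bullet> e j (t - T j i))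
      \<le> 2 * integral {\<alpha>..\<beta>} (\<lambda>t. e i t \<bullet> e i t)
        + 2 * integral {\<alpha>..\<beta>} (\<lambda>t. (e i t - e j (t - T j i)) \<bullet> (e i t - e j (t - T j i)))"
    and "integral {\<alpha>..\<beta>} (\<lambda>t. e i t \<bullet> e i t)
      \<le> 2 * integral {\<alpha>..\<beta>} (\<lambda>t. e j (t - T j i) \<bullet> e j (t - T j i))
        + 2 * integral {\<alpha>..\<beta>} (\<lambda>t. (e i t - e j (t - T j i)) \<bullet> (e i t - e j (t - T j i)))"
proof -
  have j': "j \<in> {1..n}" using neighbour_follower[OF i j] .
  let ?d = "\<lambda>t. (e i t - e j (t - T j i)) \<bullet> (e i t - e j (t - T j i))"
  have int: "(\<lambda>t. e i t \<bullet> e i t) integrable_on {\<alpha>..\<beta>}"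
    "(\<lambda>t. e j (t - T j i) \<bullet> e j (t - T j i)) integrable_on {\<alpha>..\<beta>}" "?d integrable_on {\<alpha>..\<beta>}"
    by (intro integrable_continuous_real continuous_on_state_sq continuous_on_delayed_state_sq
        continuous_on_mismatch_sq i j')+
  have "e j (t - T j i) \<bullet> e j (t - T j i) \<le> 2 * (e i t \<bullet> e i t) + 2 * ?d t" for t
    by (rule inner_self_le_twice)
  moreover have "e i t \<bullet> e i t \<le> 2 * (e j (t - T j i) \<bullet> e j (t - T j i)) + 2 * ?d t" for t
  proof -
    have "?d t = (e j (t - T j i) - e i t) \<bullet> (e j (t - T j i) - e i t)"
      by (simp add: inner_diff_left inner_diff_right inner_commute)
    then show ?thesis using inner_self_le_twice[of "e i t" "e j (t - T j i)"] by simp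
  qed
  ultimately have "integral {\<alpha>..\<beta>} (\<lambda>t. e j (t - T j i) \<bullet> e j (t - T j i))
        \<le> integral {\<alpha>..\<beta>} (\<lambda>t. 2 * (e i t \<bullet> e i t) + 2 * ?d t)"
    and "integral {\<alpha>..\<beta>} (\<lambda>t. e i t \<bullet> e i t)
        \<le> integral {\<alpha>..\<beta>} (\<lambda>t. 2 * (e j (t - T j i) \<bullet> e j (t - T j i)) + 2 * ?d t)"
    using int by (intro integral_le integrable_add; simp)+
  then show "integral {\<alpha>..\<beta>} (\<lambda>t. e j (t - T j i) \<bullet> e j (t - T j i))
      \<le> 2 * integral {\<alpha>..\<beta>} (\<lambda>t. e i t \<bullet> e i t) + 2 * integral {\<alpha>..\<beta>} ?d"
    and "integral {\<alpha>..\<beta>} (\<lambda>t. e i t \<bullet> e i t)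
      \<le> 2 * integral {\<alpha>..\<beta>} (\<lambda>t. e j (t - T j i) \<bullet> e j (t - T j i)) + 2 * integral {\<alpha>..\<beta>} ?d"
    using int by (simp_all add: integral_add)
qed

lemma integral_neighbour_state_le:
  assumes i: "i \<in> {1..n}" and j: "j \<in> N i" and window: "0 \<le> a" "a \<le> b" "a \<le> \<alpha>" "\<beta> \<le> b"
  shows "integral {\<alpha> + h..\<beta> - h} (\<lambda>t. e j t \<bullet> e j t)
    \<le> 2 * integral {\<alpha>..\<beta>} (\<lambda>t. e i t \<bullet> e i t) + 4 / \<kappa> * (energy e a - energy e b)"
proof -
  have j': "j \<in> {1..n}" using neighbour_follower[OF i j] .
  have "integral {\<alpha> + h..\<beta> - h} (\<lambda>t. e j t \<bullet> e j t)
      \<le> integral {\<alpha> - T j i..\<beta> - T j i} (\<lambda>t. e j t \<bullet> e j t)"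
    using delay_nonneg[OF i j] delay_le[OF i j]
    by (intro integral_Icc_mono_nonneg continuous_on_state_sq j') auto
  also have "\<dots> = integral {\<alpha>..\<beta>} (\<lambda>t. e j (t - T j i) \<bullet> e j (t - T j i))"
    by (rule integral_delay[symmetric])
  also have "\<dots> \<le> 2 * integral {\<alpha>..\<beta>} (\<lambda>t. e i t \<bullet> e i t) + 2 * (2 / \<kappa> * (energy e a - energy e b))"
    using integral_state_le_twice(1)[OF i j, of \<alpha> \<beta>] integral_mismatch_le[OF i j window]
    by linarith
  finally show ?thesis by simp
qed

lemma integral_state_le_neighbour:
  assumes i: "i \<in> {1..n}" and j: "j \<in> N i" and window: "0 \<le> a" "a \<le> b" "a \<le> \<alpha>" "\<beta> \<le> b"
  shows "integral {\<alpha> + h..\<beta> - h} (\<lambda>t. e i t \<bullet> e i t)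
    \<le> 2 * integral {\<alpha>..\<beta>} (\<lambda>t. e j t \<bullet> e j t) + 4 / \<kappa> * (energy e a - energy e b)"
proof -
  have j': "j \<in> {1..n}" using neighbour_follower[OF i j] .
  have "integral {\<alpha> + h..\<beta> - h} (\<lambda>t. e j (t - T j i) \<bullet> e j (t - T j i))
      = integral {\<alpha> + h - T j i..\<beta> - h - T j i} (\<lambda>t. e j t \<bullet> e j t)"
    by (rule integral_delay)
  also have "\<dots> \<le> integral {\<alpha>..\<beta>} (\<lambda>t. e j t \<bullet> e j t)"
    using delay_nonneg[OF i j] delay_le[OF i j]
    by (intro integral_Icc_mono_nonneg continuous_on_state_sq j') auto
  finally have "integral {\<alpha> + h..\<beta> - h} (\<lambda>t. e j (t - T j i) \<bullet> e j (t - T j i))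
      \<le> integral {\<alpha>..\<beta>} (\<lambda>t. e j t \<bullet> e j t)" .
  moreover have "integral {\<alpha> + h..\<beta> - h} (\<lambda>t. (e i t - e j (t - T j i)) \<bullet> (e i t - e j (t - T j i)))
      \<le> 2 / \<kappa> * (energy e a - energy e b)"
    using window h by (intro integral_mismatch_le i j) auto
  ultimately show ?thesis
    using integral_state_le_twice(2)[OF i j, of "\<alpha> + h" "\<beta> - h"] by linarith
qed

lemma integral_state_le_linked:
  assumes "(y, k) \<in> net_links" "y \<noteq> 0" "k \<noteq> 0" and window: "0 \<le> a" "a \<le> b" "a \<le> \<alpha>" "\<beta> \<le> b"
  shows "integral {\<alpha> + h..\<beta> - h} (\<lambda>t. e k t \<bullet> e k t)
    \<le> 2 * integral {\<alpha>..\<beta>} (\<lambda>t. e y t \<bullet> e y t) + 4 / \<kappa> * (energy e a - energy e b)"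
proof -
  from assms(1) consider "(y, k) \<in> net_edges n N g" | "(k, y) \<in> net_edges n N g" by blast
  then show ?thesis
  proof cases
    case 1
    then have "k \<in> {1..n} \<and> y \<in> N k" using assms(2) by (cases rule: net_edgesE) auto
    then show ?thesis using integral_state_le_neighbour[OF _ _ window] by blast
  next
    case 2
    then have "y \<in> {1..n} \<and> k \<in> N y" using assms(3) by (cases rule: net_edgesE) auto
    then show ?thesis using integral_neighbour_state_le[OF _ _ window] by blast
  qed
qed

lemma integral_state_le_of_path:
  assumes "(0, k) \<in> net_links ^^ r" "k \<noteq> 0" and "0 \<le> a" "a \<le> b"
  shows "integral {a + real r * h..b - real r * h} (\<lambda>t. e k t \<bullet> e k t)
    \<le> 4 / \<kappa> * 3 ^ r * (energy e a - energy e b)"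
  using assms(1,2)
proof (induction r arbitrary: k)
  case (Suc r)
  define J where "J = energy e a - energy e b"
  have J: "0 \<le> J" using energy_antimono[OF e assms(3,4)] by (simp add: J_def)
  have window: "a \<le> a + real r * h" "b - real r * h \<le> b" using h by auto
  have shift: "a + real (Suc r) * h = (a + real r * h) + h" "b - real (Suc r) * h = (b - real r * h) - h"
    by (simp_all add: algebra_simps)
  have one: "1 / \<kappa> * J \<le> 4 / \<kappa> * 3 ^ Suc r * J"
  proof (rule mult_right_mono[OF _ J])
    have "1 \<le> 4 * (3::real) ^ Suc r" using one_le_power[of "3::real" "Suc r"] by linarith
    then show "1 / \<kappa> \<le> 4 / \<kappa> * 3 ^ Suc r" using \<kappa> by (simp add: field_simps)
  qed
  have step: "2 * (4 / \<kappa> * 3 ^ r * J) + 4 / \<kappa> * J \<le> 4 / \<kappa> * 3 ^ Suc r * J"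
  proof -
    have "4 / \<kappa> * J * 1 \<le> 4 / \<kappa> * J * 3 ^ r"
      using \<kappa> J by (intro mult_left_mono) auto
    then have "2 * (4 / \<kappa> * J * 3 ^ r) + 4 / \<kappa> * J \<le> 3 * (4 / \<kappa> * J * 3 ^ r)" by linarith
    then show ?thesis by (simp add: mult_ac)
  qed
  obtain y where y: "(0, y) \<in> net_links ^^ r" "(y, k) \<in> net_links"
    using Suc.prems(1) by (rule relpow_Suc_E)
  show ?case
  proof (cases "y = 0")
    case True
    then have "k \<in> {1..n}" "g k = 1" using leader_link_pinned y(2) Suc.prems(2) by auto
    then have "integral {a + real (Suc r) * h..b - real (Suc r) * h} (\<lambda>t. e k t \<bullet> e k t) \<le> 1 / \<kappa> * J"
      unfolding J_def using assms(3,4) h by (intro integral_leader_state_le) auto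
    then show ?thesis using one by (simp add: J_def)
  next
    case False
    have "integral {a + real r * h..b - real r * h} (\<lambda>t. e y t \<bullet> e y t) \<le> 4 / \<kappa> * 3 ^ r * J"
      using Suc.IH[OF y(1) False] by (simp add: J_def)
    then show ?thesis
      using integral_state_le_linked[OF y(2) False Suc.prems(2) assms(3,4) window] step
      unfolding shift J_def by linarith
  qed
qed simp

lemma integral_state_window_le:
  assumes "k \<in> {1..n}" "0 \<le> t"
  defines "R \<equiv> card net_links"
  shows "integral {t + R * h..t + R * h + h + 1} (\<lambda>t. e k t \<bullet> e k t)
    \<le> 4 / \<kappa> * 3 ^ R * (energy e t - energy e (t + 2 * R * h + h + 1))"
proof -
  let ?L = "2 * R * h + h + 1"
  obtain r where r: "r \<le> R" "(0, k) \<in> net_links ^^ r"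
    using leader_reaches_follower[OF assms(1)] unfolding R_def by blast
  have J: "0 \<le> energy e t - energy e (t + ?L)"
    using energy_antimono[OF e] assms(2) h by simp
  have "real r * h \<le> R * h" using r(1) h by (simp add: mult_right_mono)
  then have "integral {t + R * h..t + R * h + h + 1} (\<lambda>t. e k t \<bullet> e k t)
      \<le> integral {t + real r * h..(t + ?L) - real r * h} (\<lambda>t. e k t \<bullet> e k t)"
    using assms(1) by (intro integral_Icc_mono_nonneg continuous_on_state_sq) (auto simp: mult.commute)
  also have "\<dots> \<le> 4 / \<kappa> * 3 ^ r * (energy e t - energy e (t + ?L))"
    using r(2) assms h by (intro integral_state_le_of_path) auto
  also have "\<dots> \<le> 4 / \<kappa> * 3 ^ R * (energy e t - energy e (t + ?L))"
    using r(1) \<kappa> J by (intro mult_right_mono mult_left_mono power_increasing) auto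
  finally show ?thesis by (simp add: algebra_simps)
qed

lemma delay_integral_le_state_integral:
  assumes i: "i \<in> {1..n}" and j: "j \<in> N i" and "s \<le> \<tau> - h" "\<tau> \<le> s + h + 1"
  shows "integral {\<tau> - T j i..\<tau>} (\<lambda>s. quad_form (K j i) (e j s))
    \<le> \<Lambda> * integral {s..s + h + 1} (\<lambda>s. e j s \<bullet> e j s)"
proof -
  have j': "j \<in> {1..n}" using neighbour_follower[OF i j] .
  have "continuous_on {\<tau> - T j i..\<tau>} (\<lambda>s. quad_form (K j i) (e j s))"
    by (rule continuous_on_quad_form) (rule error_solution_continuous_on[OF e j'])
  moreover have "continuous_on {\<tau> - T j i..\<tau>} (\<lambda>s. \<Lambda> * (e j s \<bullet> e j s))"
    by (rule continuous_on_mult[OF continuous_on_const continuous_on_state_sq[OF j']])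
  ultimately have "integral {\<tau> - T j i..\<tau>} (\<lambda>s. quad_form (K j i) (e j s))
      \<le> integral {\<tau> - T j i..\<tau>} (\<lambda>s. \<Lambda> * (e j s \<bullet> e j s))"
    using gain_upper[OF i j] by (intro integral_le integrable_continuous_real)
  also have "\<dots> = \<Lambda> * integral {\<tau> - T j i..\<tau>} (\<lambda>s. e j s \<bullet> e j s)"
    by simp
  also have "\<dots> \<le> \<Lambda> * integral {s..s + h + 1} (\<lambda>s. e j s \<bullet> e j s)"
  proof (rule mult_left_mono[OF _ \<Lambda>])
    show "integral {\<tau> - T j i..\<tau>} (\<lambda>s. e j s \<bullet> e j s) \<le> integral {s..s + h + 1} (\<lambda>s. e j s \<bullet> e j s)"
      using assms(3,4) delay_nonneg[OF i j] delay_le[OF i j]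
      by (intro integral_Icc_mono_nonneg continuous_on_state_sq[OF j']) auto
  qed
  finally show ?thesis .
qed

lemma ex_energy_le_state_integrals:
  assumes small: "\<And>k. k \<in> {1..n} \<Longrightarrow> integral {s..s + h + 1} (\<lambda>t. e k t \<bullet> e k t) \<le> X"
  shows "\<exists>\<tau>\<in>{s + h..s + h + 1}. energy e \<tau> \<le> (real n + \<Lambda> * (\<Sum>i\<in>{1..n}. real (card (N i)))) / 2 * X"
proof -
  define S where "S t = (\<Sum>k\<in>{1..n}. e k t \<bullet> e k t)" for t
  have S_cont: "continuous_on U S" for U
    unfolding S_def by (rule continuous_on_sum) (rule continuous_on_state_sq; simp)
  obtain \<tau> where \<tau>: "\<tau> \<in> {s + h..s + h + 1}" "S \<tau> \<le> integral {s + h..s + h + 1} S"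
    using ex_mult_le_integral[OF S_cont, of "s + h" "s + h + 1"] by auto
  have "integral {s + h..s + h + 1} S \<le> integral {s..s + h + 1} S"
    using h by (intro integral_Icc_mono_nonneg S_cont) (auto simp: S_def sum_nonneg)
  also have "\<dots> = (\<Sum>k\<in>{1..n}. integral {s..s + h + 1} (\<lambda>t. e k t \<bullet> e k t))"
    unfolding S_def
    by (rule integral_sum) (simp_all add: integrable_continuous_real continuous_on_state_sq)
  also have "\<dots> \<le> (\<Sum>k\<in>{1..n}. X)"
    by (rule sum_mono) (rule small)
  finally have S_le: "S \<tau> \<le> real n * X" using \<tau>(2) by simp
  have "integral {\<tau> - T j i..\<tau>} (\<lambda>s. quad_form (K j i) (e j s)) / 2 \<le> \<Lambda> * X / 2"
    if i: "i \<in> {1..n}" and j: "j \<in> N i" for i j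
  proof -
    have "integral {\<tau> - T j i..\<tau>} (\<lambda>s. quad_form (K j i) (e j s))
        \<le> \<Lambda> * integral {s..s + h + 1} (\<lambda>s. e j s \<bullet> e j s)"
      using \<tau>(1) by (intro delay_integral_le_state_integral[OF i j]) auto
    also have "\<dots> \<le> \<Lambda> * X"
      using small[OF neighbour_follower[OF i j]] \<Lambda> by (rule mult_left_mono)
    finally show ?thesis by (simp add: divide_right_mono)
  qed
  then have "(\<Sum>i\<in>{1..n}. \<Sum>j\<in>N i. integral {\<tau> - T j i..\<tau>} (\<lambda>s. quad_form (K j i) (e j s)) / 2)
      \<le> (\<Sum>i\<in>{1..n}. \<Sum>j\<in>N i. \<Lambda> * X / 2)"
    by (intro sum_mono) auto
  also have "\<dots> = (\<Sum>i\<in>{1..n}. real (card (N i))) * (\<Lambda> * X / 2)"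
    by (simp add: sum_distrib_right)
  finally have "energy e \<tau> \<le> real n * X / 2 + (\<Sum>i\<in>{1..n}. real (card (N i))) * (\<Lambda> * X / 2)"
    using S_le unfolding energy_def S_def sum_divide_distrib[symmetric] by linarith
  also have "\<dots> = (real n + \<Lambda> * (\<Sum>i\<in>{1..n}. real (card (N i)))) / 2 * X"
    by (simp add: field_simps)
  finally show ?thesis using \<tau>(1) by blast
qed

lemma energy_contracts:
  "\<exists>\<theta> L. 0 < \<theta> \<and> \<theta> < 1 \<and> 0 < L \<and> (\<forall>t\<ge>0. energy e (t + L) \<le> \<theta> * energy e t)"
proof -
  define R where "R = card net_links"
  define L where "L = 2 * R * h + h + 1"
  define D where "D = (real n + \<Lambda> * (\<Sum>i\<in>{1..n}. real (card (N i)))) / 2 * (4 / \<kappa> * 3 ^ R)"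
  have D: "0 \<le> D"
    unfolding D_def using \<kappa> \<Lambda>
    by (intro mult_nonneg_nonneg divide_nonneg_pos add_nonneg_nonneg sum_nonneg) auto
  have Rh: "0 \<le> real R * h" using h by simp
  have L: "0 < L" unfolding L_def using Rh h by linarith
  have "energy e (t + L) \<le> (D + 1) / (D + 2) * energy e t" if "0 \<le> t" for t
  proof -
    let ?J = "energy e t - energy e (t + L)"
    have J: "0 \<le> ?J" using energy_antimono[OF e that, of "t + L"] L by simp
    have "integral {t + R * h..t + R * h + h + 1} (\<lambda>t. e k t \<bullet> e k t) \<le> 4 / \<kappa> * 3 ^ R * ?J"
      if "k \<in> {1..n}" for k
      using integral_state_window_le[OF that \<open>0 \<le> t\<close>] by (simp add: L_def R_def add.assoc)
    from ex_energy_le_state_integrals[OF this] obtain \<tau> where \<tau>: "\<tau> \<in> {t + R * h + h..t + R * h + h + 1}"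
      "energy e \<tau> \<le> (real n + \<Lambda> * (\<Sum>i\<in>{1..n}. real (card (N i)))) / 2 * (4 / \<kappa> * 3 ^ R * ?J)"
      by blast
    have "t + R * h + h \<le> \<tau>" "\<tau> \<le> t + R * h + h + 1" using \<tau>(1) by auto
    then have "0 \<le> \<tau>" "\<tau> \<le> t + L" using that h Rh unfolding L_def by linarith+
    then have "energy e (t + L) \<le> energy e \<tau>" by (rule energy_antimono[OF e])
    also have "\<dots> \<le> D * ?J" using \<tau>(2) by (simp add: D_def mult.assoc)
    also have "\<dots> \<le> (D + 1) * ?J" using J by (simp add: mult_right_mono)
    finally have "(D + 2) * energy e (t + L) \<le> (D + 1) * energy e t"
      by (simp add: algebra_simps)
    then show ?thesis using D by (simp add: pos_le_divide_eq mult.commute)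
  qed
  moreover have "0 < (D + 1) / (D + 2)" "(D + 1) / (D + 2) < 1" using D by auto
  ultimately show ?thesis using L by blast
qed

end

lemma error_exponential_decay:
  assumes e: "error_solution e"
  shows "\<exists>C \<rho>. 0 < \<rho> \<and> \<rho> < 1 \<and> (\<forall>t\<ge>0. \<forall>i\<in>{1..n}. norm (e i t) \<le> C * \<rho> powr t)"
proof -
  obtain \<kappa> where \<kappa>: "0 < \<kappa>" "\<And>i j v. i \<in> {1..n} \<Longrightarrow> j \<in> N i \<Longrightarrow> \<kappa> * (v \<bullet> v) \<le> quad_form (K j i) v"
    "\<And>i v. i \<in> {1..n} \<Longrightarrow> g i = 1 \<Longrightarrow> \<kappa> * (v \<bullet> v) \<le> quad_form (K 0 i) v"
    using ex_gain_lower_bound by blast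
  obtain \<Lambda> where \<Lambda>: "0 < \<Lambda>" "\<And>i j v. i \<in> {1..n} \<Longrightarrow> j \<in> N i \<Longrightarrow> quad_form (K j i) v \<le> \<Lambda> * (v \<bullet> v)"
    using ex_gain_upper_bound by blast
  obtain \<theta> L where "0 < \<theta>" "\<theta> < 1" "0 < L" "\<And>t. 0 \<le> t \<Longrightarrow> energy e (t + L) \<le> \<theta> * energy e t"
    using energy_contracts[OF e \<kappa> less_imp_le[OF \<Lambda>(1)] \<Lambda>(2) max_delay_bounds] by blast
  then obtain C \<sigma> where \<sigma>: "0 < \<sigma>" "\<sigma> < 1" "\<And>t. 0 \<le> t \<Longrightarrow> energy e t \<le> C * \<sigma> powr t"
    using contracting_imp_exponential_bound[of "energy e"] energy_antimono[OF e] energy_nonneg[OF e]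
    by metis
  have "norm (e i t) \<le> sqrt (2 * C) * sqrt \<sigma> powr t" if "0 \<le> t" "i \<in> {1..n}" for t i
  proof -
    have "e i t \<bullet> e i t \<le> 2 * C * \<sigma> powr t"
      using inner_self_half_le_energy[OF e that(2), of t] \<sigma>(3)[OF that(1)] by simp
    then have "norm (e i t) \<le> sqrt (2 * C * \<sigma> powr t)"
      by (simp add: norm_eq_sqrt_inner)
    also have "\<dots> = sqrt (2 * C) * sqrt \<sigma> powr t"
      using \<sigma>(1) by (simp add: real_sqrt_mult powr_half_sqrt[symmetric] powr_powr mult.commute)
    finally show ?thesis .
  qed
  moreover have "0 < sqrt \<sigma>" "sqrt \<sigma> < 1" using \<sigma> by auto
  ultimately show ?thesis by blast
qed

section \<open>Solutions of the follower system\<close>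

lemma follower_rhs_diff:
  "follower_rhs N K T g x0 x i t - follower_rhs N K T g x0 y i t = error_rhs (\<lambda>i t. x i t - y i t) i t"
proof -
  have link: "A *v (a - c) - A *v (b - d) = A *v ((a - b) - (c - d))"
    for A :: "real^'m^'m" and a b c d :: "real^'m"
    by (simp add: matrix_vector_mult_diff_distrib algebra_simps)
  have "(\<Sum>j\<in>N i. K j i *v (x j (t - T j i) - x i t)) - (\<Sum>j\<in>N i. K j i *v (y j (t - T j i) - y i t))
     = (\<Sum>j\<in>N i. K j i *v ((x j (t - T j i) - y j (t - T j i)) - (x i t - y i t)))"
    by (simp only: sum_subtractf[symmetric] link)
  moreover have "g i *\<^sub>R (K 0 i *v (x0 (t - T 0 i) - x i t)) - g i *\<^sub>R (K 0 i *v (x0 (t - T 0 i) - y i t))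
     = - (g i *\<^sub>R (K 0 i *v (x i t - y i t)))"
    by (simp add: matrix_vector_mult_diff_distrib algebra_simps)
  ultimately show ?thesis
    unfolding follower_rhs_def error_rhs_def by (simp add: algebra_simps)
qed

lemma error_solution_diff:
  assumes "follower_solution n N K T g x0 x" "follower_solution n N K T g x0 y"
  shows "error_solution (\<lambda>i t. x i t - y i t)"
  unfolding error_solution_def
proof (intro ballI conjI allI impI)
  fix i and t :: real assume "i \<in> {1..n}"
  then show "continuous_on UNIV (\<lambda>t. x i t - y i t)"
    using assms by (intro continuous_on_diff) (auto simp: follower_solution_def)
  assume "0 < t"
  with \<open>i \<in> {1..n}\<close> have "((\<lambda>t. x i t - y i t) has_vector_derivative
      follower_rhs N K T g x0 x i t - follower_rhs N K T g x0 y i t) (at t)"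
    using assms by (intro has_vector_derivative_diff) (auto simp: follower_solution_def)
  then show "((\<lambda>t. x i t - y i t) has_vector_derivative error_rhs (\<lambda>i t. x i t - y i t) i t) (at t)"
    by (simp only: follower_rhs_diff)
qed

lemma follower_solution_shift:
  assumes "0 \<le> P" and periodic: "\<And>t. x0 (t + P) = x0 t"
    and x: "follower_solution n N K T g x0 x"
  shows "follower_solution n N K T g x0 (\<lambda>i t. x i (t + P))"
  unfolding follower_solution_def
proof (intro ballI conjI allI impI)
  fix i and t :: real assume i: "i \<in> {1..n}"
  have x_cont: "continuous_on UNIV (x i)" using x i by (simp add: follower_solution_def)
  then show "continuous_on UNIV (\<lambda>t. x i (t + P))"
    by (rule continuous_on_compose2) (auto intro: continuous_intros)
  assume "0 < t"
  then have "(x i has_vector_derivative follower_rhs N K T g x0 x i (t + P)) (at (t + P))"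
    using x i \<open>0 \<le> P\<close> by (simp add: follower_solution_def)
  then have "(x i \<circ> (\<lambda>s. s + P) has_vector_derivative 1 *\<^sub>R follower_rhs N K T g x0 x i (t + P)) (at t)"
    by (intro vector_diff_chain_at) (auto intro!: derivative_eq_intros)
  moreover have "follower_rhs N K T g x0 x i (t + P) = follower_rhs N K T g x0 (\<lambda>i t. x i (t + P)) i t"
    using periodic[of "t - T 0 i"] by (simp add: follower_rhs_def algebra_simps)
  ultimately show "((\<lambda>t. x i (t + P)) has_vector_derivative
      follower_rhs N K T g x0 (\<lambda>i t. x i (t + P)) i t) (at t)"
    by (simp add: o_def)
qed

lemma solutions_converge:
  assumes "follower_solution n N K T g x0 x" "follower_solution n N K T g x0 y" "i \<in> {1..n}"
  shows "((\<lambda>t. x i t - y i t) \<longlongrightarrow> 0) at_top"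
proof -
  obtain C \<rho> where "0 < \<rho>" "\<rho> < 1" and bound: "\<forall>t\<ge>0. norm (x i t - y i t) \<le> C * \<rho> powr t"
    using error_exponential_decay[OF error_solution_diff[OF assms(1,2)]] assms(3) by blast
  show ?thesis
  proof (rule Lim_null_comparison)
    show "\<forall>\<^sub>F t in at_top. norm (x i t - y i t) \<le> C * \<rho> powr t"
      using bound by (intro eventually_at_top_linorder[THEN iffD2]) blast
    show "((\<lambda>t. C * \<rho> powr t) \<longlongrightarrow> 0) at_top"
      by (intro tendsto_mult_right_zero tendsto_powr_at_top_0) fact+
  qed
qed

lemma solution_periodic_asymptote:
  assumes "0 < P" "\<And>t. x0 (t + P) = x0 t" "follower_solution n N K T g x0 x" "i \<in> {1..n}"
  shows "\<exists>p. (\<forall>t. p (t + P) = p t) \<and> ((\<lambda>t. x i t - p t) \<longlongrightarrow> 0) at_top"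
proof -
  have "error_solution (\<lambda>i t. x i (t + P) - x i t)"
    using assms by (intro error_solution_diff follower_solution_shift) auto
  then obtain C \<rho> where "0 < \<rho>" "\<rho> < 1" "\<And>t. 0 \<le> t \<Longrightarrow> norm (x i (t + P) - x i t) \<le> C * \<rho> powr t"
    using error_exponential_decay assms(4) by blast
  then show ?thesis using ex_periodic_asymptote[OF assms(1)] by blast
qed

end

theorem mainTheorem5:
  fixes n :: nat
    and N :: "nat \<Rightarrow> nat set"
    and K :: "nat \<Rightarrow> nat \<Rightarrow> real^'m^'m"
    and T :: "nat \<Rightarrow> nat \<Rightarrow> real"
    and g :: "nat \<Rightarrow> real"
    and x0 :: "real \<Rightarrow> real^'m"
  assumes "n \<ge> 1"
    and x0_cont: "continuous_on UNIV x0"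
    and x0_bdd: "bounded (range x0)"
    and N_sub: "\<forall>i\<in>{1..n}. N i \<subseteq> {1..n} - {i}"
    and K_pd: "\<forall>i\<in>{1..n}. \<forall>j\<in>N i. sym_pos_def_mat (K j i)"
    and K0_pd: "\<forall>i\<in>{1..n}. g i = 1 \<longrightarrow> sym_pos_def_mat (K 0 i)"
    and g01: "\<forall>i\<in>{1..n}. g i \<in> {0, 1}"
    and g_some: "\<exists>i\<in>{1..n}. g i = 1"
    and T_nonneg: "\<forall>i\<in>{1..n}. (\<forall>j\<in>N i. T j i \<ge> 0) \<and> T 0 i \<ge> 0"
    and conn: "net_connected n N g"
    and links: "links_ok n N K"
  shows "(\<forall>x y. follower_solution n N K T g x0 x \<and> follower_solution n N K T g x0 y \<longrightarrow>
            (\<forall>i\<in>{1..n}. ((\<lambda>t. x i t - y i t) \<longlongrightarrow> 0) at_top))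
       \<and> (\<forall>P>0. (\<forall>t. x0 (t + P) = x0 t) \<longrightarrow>
            (\<forall>x. follower_solution n N K T g x0 x \<longrightarrow>
               (\<forall>i\<in>{1..n}. \<exists>p :: real \<Rightarrow> real^'m. (\<forall>t. p (t + P) = p t) \<and>
                    ((\<lambda>t. x i t - p t) \<longlongrightarrow> 0) at_top)))"
proof -
  interpret follower_network n N K T g
    by unfold_locales (fact N_sub K_pd K0_pd g01 T_nonneg conn links)+
  show ?thesis
    using solutions_converge solution_periodic_asymptote by blast
qed

end
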